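(* Let $n\in\mathbb{N}$, $A_n=\{(i,j)\in\mathbb{Z}^2:0\le i,j\le 14n\}$ and $\tau(x,y)=(x,(28n)^y)$. Let $p_1=(a_1,b_1)$, $p_2=(a_2,b_2)$, $p_3=(a_3,b_3)\in A_n$ with $\max(b_1,b_2)<b_3$, and let $\Box=(\min(a_1,a_2),\max(a_1,a_2))\times(\max(b_1,b_2),b_3)$ (an open axis-aligned rectangle, possibly empty). Then for every $p\in A_n\cap\Box$, the point $\tau(p)$ lies in the interior of the triangle with vertices $\tau(p_1),\tau(p_2),\tau(p_3)$. *)

theory Defs
  imports "HOL-Analysis.Analysis"
begin

definition grid :: "nat \<Rightarrow> (int \<times> int) set" where
  "grid n = {(i, j). 0 \<le> i \<and> i \<le> int (14 * n) \<and> 0 \<le> j \<and> j \<le> int (14 * n)}"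

text \<open>tau(x,y) = (x, (28n)^y), used on points of the grid (y >= 0).\<close>
definition tau :: "nat \<Rightarrow> int \<times> int \<Rightarrow> real \<times> real" where
  "tau n p = (real_of_int (fst p), real (28 * n) ^ nat (snd p))"

definition box :: "int \<Rightarrow> int \<Rightarrow> int \<Rightarrow> int \<Rightarrow> int \<Rightarrow> (real \<times> real) set" where
  "box a1 a2 b1 b2 b3 =
     {real_of_int (min a1 a2) <..< real_of_int (max a1 a2)} \<times> {real_of_int (max b1 b2) <..< real_of_int b3}"

end

theory Submission
  imports Defs
begin

text \<open>Since the heights grow by a factor of at least 28n from one row to the next, the
  triangle is very tall and thin near its apex: seen from a point p of the box, the apex
  \<open>\<tau>(p\<^sub>3)\<close> lies almost vertically above it, and the two base vertices lie below it, one
  strictly to the left and one strictly to the right. The three orientation determinants of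
  p against the sides of the triangle are then all positive, because the horizontal offset
  of the apex, at most 14n, is dominated by the factor 28n in height.\<close>

definition orient :: "real \<times> real \<Rightarrow> real \<times> real \<Rightarrow> real \<times> real \<Rightarrow> real" where
  "orient u v q = (fst u - fst q) * (snd v - snd q) - (snd u - snd q) * (fst v - fst q)"

lemma interior_convex_hull_3_if_orient_pos:
  fixes P1 P2 P3 q :: "real \<times> real"
  assumes "orient P2 P3 q > 0" "orient P3 P1 q > 0" "orient P1 P2 q > 0"
  shows "q \<in> interior (convex hull {P1, P2, P3})"
proof -
  define S where "S = {z. orient P2 P3 z > 0 \<and> orient P3 P1 z > 0 \<and> orient P1 P2 z > 0}"
  have "open S"
    unfolding S_def orient_def by (intro open_Collect_conj open_Collect_less continuous_intros)
  moreover have "S \<subseteq> convex hull {P1, P2, P3}"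
  proof
    fix z assume "z \<in> S"
    define f1 f2 f3 where "f1 = orient P2 P3 z" and "f2 = orient P3 P1 z" and "f3 = orient P1 P2 z"
    define D where "D = f1 + f2 + f3"
    have pos: "f1 > 0" "f2 > 0" "f3 > 0"
      using \<open>z \<in> S\<close> unfolding S_def f1_def f2_def f3_def by auto
    then have "D > 0" unfolding D_def by simp
    text \<open>Up to the factor D, the orientations are the barycentric coordinates of z.\<close>
    have "f1 * fst P1 + f2 * fst P2 + f3 * fst P3 = D * fst z"
         "f1 * snd P1 + f2 * snd P2 + f3 * snd P3 = D * snd z"
      unfolding D_def f1_def f2_def f3_def orient_def by (simp_all add: algebra_simps)
    with \<open>D > 0\<close> have "z = (f1/D) *\<^sub>R P1 + (f2/D) *\<^sub>R P2 + (f3/D) *\<^sub>R P3"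
      by (simp add: prod_eq_iff field_simps)
    moreover have "f1/D + f2/D + f3/D = 1"
      using \<open>D > 0\<close> by (simp add: D_def add_divide_distrib [symmetric])
    ultimately show "z \<in> convex hull {P1, P2, P3}"
      unfolding convex_hull_3 using pos \<open>D > 0\<close>
      by (intro CollectI exI[of _ "f1/D"] exI[of _ "f2/D"] exI[of _ "f3/D"]) auto
  qed
  moreover have "q \<in> S" using assms S_def by auto
  ultimately show ?thesis using interior_maximal by blast
qed

lemma orient_pos_if_heights_separated:
  fixes a1 a2 a3 x y1 y2 y3 y N :: real
  assumes "a1 + 1 \<le> x" "x + 1 \<le> a2" "\<bar>a3 - x\<bar> \<le> N / 2" "N > 2"
    and "0 < y1" "0 < y2" "N * y1 \<le> y" "N * y2 \<le> y" "N * y \<le> y3"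
  shows "orient (a2, y2) (a3, y3) (x, y) > 0"
    and "orient (a3, y3) (a1, y1) (x, y) > 0"
    and "orient (a1, y1) (a2, y2) (x, y) > 0"
proof -
  have "y1 < N * y1" "y2 < N * y2" using assms by simp_all
  then have below: "y1 < y" "y2 < y" using assms by linarith+
  then have "0 < y" using assms by linarith
  have "y < y * (N / 2)" using \<open>0 < y\<close> \<open>N > 2\<close> by simp
  then have apex: "y * (N / 2) < y3 - y"
    using \<open>N * y \<le> y3\<close> by (simp add: algebra_simps)
  moreover have "0 < y * (N / 2)" using \<open>0 < y\<close> \<open>N > 2\<close> by simp
  ultimately have "y < y3" by linarith
  have "\<bar>(y - y2) * (a3 - x)\<bar> \<le> y * (N / 2)" "\<bar>(y - y1) * (a3 - x)\<bar> \<le> y * (N / 2)"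
    unfolding abs_mult using below assms by (intro mult_mono; simp)+
  moreover have "y3 - y \<le> (a2 - x) * (y3 - y)" "y3 - y \<le> (x - a1) * (y3 - y)"
    using mult_right_mono[of 1 "a2 - x" "y3 - y"] mult_right_mono[of 1 "x - a1" "y3 - y"]
      assms \<open>y < y3\<close> by simp_all
  moreover have "orient (a2, y2) (a3, y3) (x, y) = (a2 - x) * (y3 - y) + (y - y2) * (a3 - x)"
    "orient (a3, y3) (a1, y1) (x, y) = (x - a1) * (y3 - y) - (y - y1) * (a3 - x)"
    by (simp_all add: orient_def algebra_simps)
  ultimately show "orient (a2, y2) (a3, y3) (x, y) > 0" "orient (a3, y3) (a1, y1) (x, y) > 0"
    using apex abs_ge_self[of "(y - y1) * (a3 - x)"] abs_ge_minus_self[of "(y - y2) * (a3 - x)"]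
    by linarith+
  have "(x - a1) * (y - y2) > 0" "(a2 - x) * (y - y1) > 0" using assms below by simp_all
  then show "orient (a1, y1) (a2, y2) (x, y) > 0" by (simp add: orient_def algebra_simps)
qed

lemma tau_in_interior_triangle:
  fixes n :: nat and a1 a2 a3 b1 b2 b3 x y :: int
  assumes "0 < n" "a1 < x" "x < a2" "\<bar>a3 - x\<bar> \<le> 14 * int n"
    and "0 \<le> b1" "0 \<le> b2" "b1 < y" "b2 < y" "y < b3"
  shows "tau n (x, y) \<in> interior (convex hull {tau n (a1, b1), tau n (a2, b2), tau n (a3, b3)})"
proof -
  define N where "N = real (28 * n)"
  have tau: "tau n (u, v) = (real_of_int u, N ^ nat v)" for u v
    by (simp add: tau_def N_def)
  have "N > 2" using \<open>0 < n\<close> by (simp add: N_def)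
  have step: "N * N ^ nat k \<le> N ^ nat m" if "k < m" "0 \<le> k" for k m
    using power_increasing[of "Suc (nat k)" "nat m" N] that \<open>N > 2\<close> by simp
  have "real_of_int a1 + 1 \<le> real_of_int x" "real_of_int x + 1 \<le> real_of_int a2"
    using assms(2,3) by linarith+
  moreover have "\<bar>real_of_int a3 - real_of_int x\<bar> \<le> N / 2"
    using assms(4) unfolding N_def by (simp flip: of_int_diff of_int_abs)
  moreover have "0 < N ^ nat b1" "0 < N ^ nat b2" using \<open>N > 2\<close> by simp_all
  moreover have "N * N ^ nat b1 \<le> N ^ nat y" "N * N ^ nat b2 \<le> N ^ nat y"
      "N * N ^ nat y \<le> N ^ nat b3"
    using assms by (intro step; linarith)+
  ultimately show ?thesis
    unfolding tau using \<open>N > 2\<close>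
    by (intro interior_convex_hull_3_if_orient_pos orient_pos_if_heights_separated)
qed

theorem lemma8:
  fixes n :: nat and a1 b1 a2 b2 a3 b3 :: int and p :: "int \<times> int"
  assumes "(a1, b1) \<in> grid n" and "(a2, b2) \<in> grid n" and "(a3, b3) \<in> grid n"
    and "max b1 b2 < b3"
    and "p \<in> grid n"
    and "(real_of_int (fst p), real_of_int (snd p)) \<in> box a1 a2 b1 b2 b3"
  shows "tau n p \<in> interior (convex hull {tau n (a1, b1), tau n (a2, b2), tau n (a3, b3)})"
proof -
  obtain x y where p: "p = (x, y)" by fastforce
  have x: "min a1 a2 < x" "x < max a1 a2" and y: "b1 < y" "b2 < y" "y < b3"
    using assms(6) unfolding p box_def by auto
  have b: "0 \<le> b1" "0 \<le> b2" and a3: "\<bar>a3 - x\<bar> \<le> 14 * int n" and "0 < n"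
    using assms(1-3,5) x unfolding p grid_def by auto
  consider "a1 < x" "x < a2" | "a2 < x" "x < a1" using x by linarith
  then show ?thesis
  proof cases
    case 1
    then show ?thesis
      unfolding p using tau_in_interior_triangle \<open>0 < n\<close> a3 b y by simp
  next
    case 2
    then show ?thesis
      unfolding p using tau_in_interior_triangle[of n a2 x a1 a3 b2 b1 y b3] \<open>0 < n\<close> a3 b y
      by (simp add: insert_commute)
  qed
qed

end
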